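(* Let $0<s<r<r_{max}(M)$, $\lambda>0$, and let $h_r$, $h_s$ be the solutions of $h''(h')^{n-1}=e^{\lambda h}\mathcal D_M(u)$ on $[0,r)$ resp. $[0,s)$ with $h_r\to\infty$ as $u\to r$ and $h_s\to\infty$ as $u\to s$. Then $h_r(u)\le h_s(u)$ for all $u\in[0,s)$.
   Context: For a real-analytic Riemannian manifold $M$ of real dimension $n\ge2$, $u=\sqrt\rho$ with $\rho(x,v)=4|v|^2$ on the Grauert tube $T^rM$. $\mathcal D_M$ is: $u^{n-1}$ for $\mathbb R^n$; $(\sin u)^{n-1}$ for $H^n$ ($r_{max}=\pi$); $(\sinh u)^{n-1}$ for the round sphere and real projective space; $2^{n-1}(\cosh\frac u2)^k(\sinh\frac u2)^{n-1}$, $k=1,3,7$, for complex projective space, quaternionic projective space, Cayley plane ($r_{max}=\infty$ except for $H^n$). Solutions are taken real-analytic in $u^2$ (so $h'(0)=0$), with $h'>0$ on $(0,r)$. *)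

theory Defs
  imports "HOL-Analysis.Analysis"
begin

datatype model = Euclid | Hyperbolic | RoundSphere | RealProj
               | ComplexProj | QuatProj | CayleyPlane

fun valid_dim :: "model \<Rightarrow> nat \<Rightarrow> bool" where
  "valid_dim ComplexProj n = (n \<ge> 2 \<and> even n)"
| "valid_dim QuatProj n = (n \<ge> 4 \<and> 4 dvd n)"
| "valid_dim CayleyPlane n = (n = 16)"
| "valid_dim _ n = (n \<ge> 2)"

fun DM :: "model \<Rightarrow> nat \<Rightarrow> real \<Rightarrow> real" where
  "DM Euclid n u = u ^ (n - 1)"
| "DM Hyperbolic n u = (sin u) ^ (n - 1)"
| "DM RoundSphere n u = (sinh u) ^ (n - 1)"
| "DM RealProj n u = (sinh u) ^ (n - 1)"
| "DM ComplexProj n u = 2 ^ (n - 1) * (cosh (u/2)) ^ 1 * (sinh (u/2)) ^ (n - 1)"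
| "DM QuatProj n u = 2 ^ (n - 1) * (cosh (u/2)) ^ 3 * (sinh (u/2)) ^ (n - 1)"
| "DM CayleyPlane n u = 2 ^ (n - 1) * (cosh (u/2)) ^ 7 * (sinh (u/2)) ^ (n - 1)"

text \<open>r < r_max(M): r_max = pi for hyperbolic space, infinity otherwise.\<close>
definition below_rmax :: "model \<Rightarrow> real \<Rightarrow> bool" where
  "below_rmax M r = (M = Hyperbolic \<longrightarrow> r < pi)"

definition real_analytic_on :: "(real \<Rightarrow> real) \<Rightarrow> real set \<Rightarrow> bool" where
  "real_analytic_on g S = (\<forall>x\<in>S. \<exists>d>0. \<exists>c::nat \<Rightarrow> real.
      \<forall>y. \<bar>y - x\<bar> < d \<longrightarrow> (\<lambda>k. c k * (y - x) ^ k) sums g y)"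

definition analytic_in_usq :: "real \<Rightarrow> (real \<Rightarrow> real) \<Rightarrow> bool" where
  "analytic_in_usq r h = (\<exists>g. real_analytic_on g {0..<r\<^sup>2} \<and> (\<forall>u\<in>{0..<r}. h u = g (u\<^sup>2)))"

definition blowup_solution ::
  "model \<Rightarrow> nat \<Rightarrow> real \<Rightarrow> real \<Rightarrow> (real \<Rightarrow> real) \<Rightarrow> bool" where
  "blowup_solution M n lam r h =
     (analytic_in_usq r h \<and>
      (\<exists>h1 h2. (\<forall>u\<in>{0..<r}.
                  (h has_real_derivative h1 u) (at u within {0..<r}) \<and>
                  (h1 has_real_derivative h2 u) (at u within {0..<r}) \<and>
                  h2 u * (h1 u) ^ (n - 1) = exp (lam * h u) * DM M n u) \<and>
               h1 0 = 0 \<and> (\<forall>u\<in>{0<..<r}. h1 u > 0)) \<and>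
      filterlim h at_top (at_left r))"

end

theory Submission
  imports Defs
begin

(* Writing the equation in its first-integral form ((h')^n)' = n e^(lam h) D_M, the proof is
   a maximum-principle argument for the difference d = h_r - h_s on [0,s).  Since h_r stays
   bounded near s while h_s blows up, d tends to -infinity at s and therefore attains its
   maximum at some point m of [0,s).  If h_r > h_s somewhere, then d(m) > 0 and d'(m) = 0
   (Fermat's rule for m > 0, the boundary condition h'(0) = 0 for m = 0).  Just right of m we
   still have h_r > h_s, so ((h_r')^n - (h_s')^n)' > 0 there; as this difference vanishes at m,
   we get h_r' > h_s', i.e. d increases right of m, contradicting maximality. *)

lemma has_real_derivative_within_Ico_at:
  assumes "(f has_real_derivative D) (at x within {a..<b})" and "a < x" and "x < b"
  shows "(f has_real_derivative D) (at x)"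
  using assms by (subst at_within_interior[symmetric]) auto

lemma power_first_integral:
  assumes "(h1 has_real_derivative v) (at u within S)" and "v * h1 u ^ (n - 1) = c"
  shows "((\<lambda>x. h1 x ^ n) has_real_derivative real n * c) (at u within S)"
proof -
  have "((\<lambda>x. h1 x ^ n) has_real_derivative v * (real n * h1 u ^ (n - 1))) (at u within S)"
    using assms(1) by (auto intro!: derivative_eq_intros)
  moreover have "v * (real n * h1 u ^ (n - 1)) = real n * c"
    using assms(2) by (metis mult.left_commute)
  ultimately show ?thesis by (simp only:)
qed

definition solves_on ::
  "nat \<Rightarrow> real \<Rightarrow> (real \<Rightarrow> real) \<Rightarrow> real set \<Rightarrow> (real \<Rightarrow> real) \<Rightarrow> (real \<Rightarrow> real) \<Rightarrow> bool"
  where "solves_on n lam w S h h1 \<longleftrightarrow>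
    (\<forall>u\<in>S. (h has_real_derivative h1 u) (at u within S) \<and>
      ((\<lambda>x. h1 x ^ n) has_real_derivative real n * exp (lam * h u) * w u) (at u within S))"

lemma solves_on_subset:
  assumes "solves_on n lam w S h h1" and "T \<subseteq> S"
  shows "solves_on n lam w T h h1"
  using assms unfolding solves_on_def by (meson DERIV_subset subsetD)

lemma attains_max_if_tends_to_bot:
  fixes d :: "real \<Rightarrow> real"
  assumes cont: "continuous_on {a..<b} d" and "a < b"
    and lim: "filterlim d at_bot (at_left b)"
  obtains m where "m \<in> {a..<b}" and "\<And>t. t \<in> {a..<b} \<Longrightarrow> d t \<le> d m"
proof -
  have "eventually (\<lambda>t. d t < d a) (at_left b)"
    using lim unfolding filterlim_at_bot_dense by blast
  then obtain c where c: "c < b" "\<And>t. c < t \<Longrightarrow> t < b \<Longrightarrow> d t < d a"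
    unfolding eventually_at_left_field by blast
  define c' where "c' = max a c"
  have "continuous_on {a..c'} d"
    using cont by (rule continuous_on_subset) (use c \<open>a < b\<close> in \<open>auto simp: c'_def\<close>)
  then obtain m where m: "m \<in> {a..c'}" "\<And>t. t \<in> {a..c'} \<Longrightarrow> d t \<le> d m"
    using continuous_attains_sup[of "{a..c'}" d] by (fastforce simp: c'_def)
  show ?thesis
  proof
    show "m \<in> {a..<b}" using m(1) c \<open>a < b\<close> by (auto simp: c'_def)
    fix t assume t: "t \<in> {a..<b}"
    show "d t \<le> d m"
    proof (cases "t \<le> c'")
      case True then show ?thesis using m(2) t by auto
    next
      case False
      then have "d t < d a" using c t by (auto simp: c'_def)
      also have "d a \<le> d m" using m(2) by (auto simp: c'_def)
      finally show ?thesis by simp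
    qed
  qed
qed

lemma continuous_minus_blowup_tends_to_bot:
  fixes f g :: "real \<Rightarrow> real"
  assumes "isCont f b" and "filterlim g at_top (at_left b)"
  shows "filterlim (\<lambda>x. f x - g x) at_bot (at_left b)"
proof -
  have "(f \<longlongrightarrow> f b) (at_left b)"
    using assms(1) by (metis filterlim_at_split isCont_def)
  then have "filterlim (\<lambda>x. - f x + g x) at_top (at_left b)"
    using assms(2) by (intro filterlim_tendsto_add_at_top[OF tendsto_minus])
  then show ?thesis by (simp add: filterlim_uminus_at_bot)
qed

lemma interior_max_derivative_zero:
  fixes d :: "real \<Rightarrow> real"
  assumes "(d has_real_derivative D) (at m within {a..<b})" and "a < m" and "m < b"
    and "\<And>t. t \<in> {a..<b} \<Longrightarrow> d t \<le> d m"
  shows "D = 0"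
proof (rule DERIV_local_max)
  show "(d has_real_derivative D) (at m)"
    using assms(1-3) by (rule has_real_derivative_within_Ico_at)
  show "0 < min (m - a) (b - m)" using assms(2,3) by simp
  show "\<forall>y. \<bar>m - y\<bar> < min (m - a) (b - m) \<longrightarrow> d y \<le> d m"
    by (auto intro!: assms(4) simp: abs_if split: if_splits)
qed

lemma positive_right_of_point:
  fixes d :: "real \<Rightarrow> real"
  assumes "continuous_on {a..<b} d" and "m \<in> {a..<b}" and "d m > 0"
  obtains t where "m < t" and "t < b" and "\<And>x. x \<in> {m..t} \<Longrightarrow> d x > 0"
proof -
  have "eventually (\<lambda>x. d x > 0) (at m within {a..<b})"
    using assms order_tendstoD(1) unfolding continuous_on_def by blast
  then obtain e where e: "e > 0" "\<And>x. x \<in> {a..<b} \<Longrightarrow> x \<noteq> m \<Longrightarrow> dist x m < e \<Longrightarrow> d x > 0"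
    unfolding eventually_at by blast
  define t where "t = min (m + e/2) ((m + b)/2)"
  show ?thesis
  proof
    show "m < t" "t < b" using e assms(2) by (auto simp: t_def min_def)
    fix x assume "x \<in> {m..t}"
    then show "d x > 0" using e assms by (cases "x = m") (auto simp: t_def dist_real_def)
  qed
qed

text \<open>Key step: where two solutions start with equal slope and the first lies strictly above
  the second, the slope of the first becomes strictly larger, since its n-th power grows faster.\<close>
lemma slope_gap_opens:
  assumes f: "solves_on n lam w S f p" and g: "solves_on n lam w S g q"
    and "{m..t} \<subseteq> S" and "m < t" and "n \<ge> 1" and "lam > 0"
    and above: "\<And>x. x \<in> {m<..<t} \<Longrightarrow> g x < f x \<and> 0 < w x"
    and "p m = q m" and p_nonneg: "p t \<ge> 0"
  shows "q t < p t"
proof -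
  define F where "F = (\<lambda>x. p x ^ n - q x ^ n)"
  have F_deriv: "(F has_real_derivative real n * (exp (lam * f x) - exp (lam * g x)) * w x)
      (at x within {m..t})" if "x \<in> {m..t}" for x
  proof -
    have "((\<lambda>x. p x ^ n) has_real_derivative real n * exp (lam * f x) * w x) (at x within {m..t})"
         "((\<lambda>x. q x ^ n) has_real_derivative real n * exp (lam * g x) * w x) (at x within {m..t})"
      using f g that \<open>{m..t} \<subseteq> S\<close> unfolding solves_on_def by (meson DERIV_subset subsetD)+
    from DERIV_diff[OF this] show ?thesis by (simp add: F_def algebra_simps)
  qed
  have "F m < F t"
  proof (rule DERIV_pos_imp_increasing_open[OF \<open>m < t\<close>])
    fix x assume x: "m < x" "x < t"
    have "0 < real n * (exp (lam * f x) - exp (lam * g x)) * w x"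
      using above[of x] x \<open>n \<ge> 1\<close> \<open>lam > 0\<close> by simp
    moreover have "(F has_real_derivative real n * (exp (lam * f x) - exp (lam * g x)) * w x) (at x)"
      using F_deriv[of x] x by (subst at_within_interior[symmetric, of x "{m..t}"]) auto
    ultimately show "\<exists>y. (F has_real_derivative y) (at x) \<and> 0 < y" by blast
  next
    show "continuous_on {m..t} F"
      using F_deriv by (intro DERIV_continuous_on) blast
  qed
  then have "q t ^ n < p t ^ n" using \<open>p m = q m\<close> by (simp add: F_def)
  then show ?thesis using p_nonneg power_less_imp_less_base by blast
qed

lemma comparison_principle:
  assumes f: "solves_on n lam w {a..<b} f p" and g: "solves_on n lam w {a..<b} g q"
    and "p a = 0" and "q a = 0" and p_nonneg: "\<And>x. x \<in> {a<..<b} \<Longrightarrow> p x \<ge> 0"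
    and w_pos: "\<And>x. x \<in> {a<..<b} \<Longrightarrow> w x > 0" and "n \<ge> 1" and "lam > 0"
    and lim: "filterlim (\<lambda>x. f x - g x) at_bot (at_left b)"
  shows "\<forall>u\<in>{a..<b}. f u \<le> g u"
proof (rule ccontr)
  assume "\<not> ?thesis"
  then obtain u0 where u0: "u0 \<in> {a..<b}" "g u0 < f u0" by (auto simp: not_le)
  define d where "d = (\<lambda>x. f x - g x)"
  have d_deriv: "(d has_real_derivative p x - q x) (at x within {a..<b})" if "x \<in> {a..<b}" for x
    using f g that unfolding solves_on_def d_def by (auto intro!: derivative_eq_intros)
  then have d_cont: "continuous_on {a..<b} d" by (intro DERIV_continuous_on) blast
  obtain m where m: "m \<in> {a..<b}" and m_max: "\<And>t. t \<in> {a..<b} \<Longrightarrow> d t \<le> d m"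
    using attains_max_if_tends_to_bot[OF d_cont _ lim[folded d_def]] u0 by auto
  have d_m_pos: "d m > 0" using m_max[OF u0(1)] u0(2) by (simp add: d_def)
  have equal_slopes: "p m = q m"
  proof (cases "m = a")
    case True then show ?thesis using \<open>p a = 0\<close> \<open>q a = 0\<close> by simp
  next
    case False
    with m have "p m - q m = 0"
      by (intro interior_max_derivative_zero[OF d_deriv[OF m]]) (auto intro: m_max)
    then show ?thesis by simp
  qed
  obtain t where t: "m < t" "t < b" and d_pos: "\<And>x. x \<in> {m..t} \<Longrightarrow> d x > 0"
    using positive_right_of_point[OF d_cont m d_m_pos] by blast
  have slope_gap: "q x < p x" if "x \<in> {m<..t}" for x
  proof (rule slope_gap_opens[OF f g _ _ \<open>n \<ge> 1\<close> \<open>lam > 0\<close> _ equal_slopes])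
    show "{m..x} \<subseteq> {a..<b}" "m < x" "p x \<ge> 0" using that m t p_nonneg by auto
    show "g y < f y \<and> 0 < w y" if "y \<in> {m<..<x}" for y
      using d_pos[of y] w_pos[of y] that \<open>x \<in> {m<..t}\<close> m t by (auto simp: d_def)
  qed
  have "d m < d t"
  proof (rule DERIV_pos_imp_increasing_open[OF \<open>m < t\<close>])
    fix x assume x: "m < x" "x < t"
    have "(d has_real_derivative p x - q x) (at x)"
      using d_deriv[of x] x m t by (intro has_real_derivative_within_Ico_at[of _ _ _ a b]) auto
    then show "\<exists>y. (d has_real_derivative y) (at x) \<and> 0 < y" using slope_gap[of x] x by auto
  next
    show "continuous_on {m..t} d" using d_cont by (rule continuous_on_subset) (use m t in auto)
  qed
  with m_max[of t] m t show False by auto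
qed

lemma DM_pos:
  assumes "below_rmax M r" and "0 < u" and "u < r"
  shows "DM M n u > 0"
proof (cases M)
  case Hyperbolic
  then have "u < pi" using assms unfolding below_rmax_def by auto
  then have "sin u > 0" using assms sin_gt_zero by auto
  then show ?thesis using Hyperbolic by simp
qed (use assms in auto)

lemma blowup_solution_solves_on:
  assumes "blowup_solution M n lam r h"
  obtains h1 where "solves_on n lam (DM M n) {0..<r} h h1"
    and "h1 0 = 0" and "\<And>u. u \<in> {0<..<r} \<Longrightarrow> h1 u > 0"
proof -
  obtain h1 h2 where sol: "\<And>u. u \<in> {0..<r} \<Longrightarrow>
        (h has_real_derivative h1 u) (at u within {0..<r}) \<and>
        (h1 has_real_derivative h2 u) (at u within {0..<r}) \<and>
        h2 u * (h1 u) ^ (n - 1) = exp (lam * h u) * DM M n u"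
    and "h1 0 = 0" and "\<And>u. u \<in> {0<..<r} \<Longrightarrow> h1 u > 0"
    using assms unfolding blowup_solution_def by blast
  moreover have "solves_on n lam (DM M n) {0..<r} h h1"
    unfolding solves_on_def
  proof
    fix u assume "u \<in> {0..<r}"
    with sol show "(h has_real_derivative h1 u) (at u within {0..<r}) \<and>
        ((\<lambda>x. h1 x ^ n) has_real_derivative real n * exp (lam * h u) * DM M n u) (at u within {0..<r})"
      using power_first_integral[where n = n] by (metis mult.assoc)
  qed
  ultimately show ?thesis using that by blast
qed

theorem lemma2p3:
  fixes M :: model and n :: nat and lam r s :: real and hr hs :: "real \<Rightarrow> real"
  assumes "valid_dim M n"
    and "0 < s" and "s < r" and "below_rmax M r"
    and "lam > 0"
    and "blowup_solution M n lam r hr"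
    and "blowup_solution M n lam s hs"
  shows "\<forall>u\<in>{0..<s}. hr u \<le> hs u"
proof -
  have "n \<ge> 1" using assms(1) by (cases M) auto
  obtain p where p: "solves_on n lam (DM M n) {0..<r} hr p" "p 0 = 0"
      and p_pos: "\<And>u. u \<in> {0<..<r} \<Longrightarrow> p u > 0"
    using blowup_solution_solves_on[OF assms(6)] by blast
  obtain q where q: "solves_on n lam (DM M n) {0..<s} hs q" "q 0 = 0"
    using blowup_solution_solves_on[OF assms(7)] by blast
  have "(hr has_real_derivative p s) (at s)"
    using p(1) assms(2,3) unfolding solves_on_def
    by (intro has_real_derivative_within_Ico_at[of _ _ _ 0 r]) auto
  then have lim: "filterlim (\<lambda>x. hr x - hs x) at_bot (at_left s)"
    using assms(7) unfolding blowup_solution_def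
    by (intro continuous_minus_blowup_tends_to_bot DERIV_isCont) blast+
  have hr_sol: "solves_on n lam (DM M n) {0..<s} hr p"
    using solves_on_subset[OF p(1)] assms(3) by auto
  have p_nonneg: "\<And>x. x \<in> {0<..<s} \<Longrightarrow> p x \<ge> 0"
    using p_pos assms(3) by (simp add: less_imp_le)
  have DM_pos_s: "\<And>x. x \<in> {0<..<s} \<Longrightarrow> DM M n x > 0"
    using DM_pos[OF assms(4)] assms(3) by simp
  show ?thesis
    by (rule comparison_principle[OF hr_sol q(1) p(2) q(2) p_nonneg DM_pos_s \<open>n \<ge> 1\<close> assms(5) lim])
qed

end
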